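(* For $h,r>0$ with $\frac hr\le\omega$, let $\Pi(h,r)>0$ be the largest positive solution of $\Pi\cosh\frac h\Pi=r$. Then $$\sup\left\{\sinh\frac{h}{\Pi(h,r)}:\ h,r>0,\ \frac hr\le\omega\right\}<z_0,$$ where $z_0=\sqrt{\tfrac12(\sqrt5-1)}$.
   Context: Let $\Xi$ be the unique positive solution of $\xi\tanh\frac1\xi+\mathrm{sech}^2\frac1\xi=\xi$, and $\omega=\frac{1}{\Xi\cosh(1/\Xi)}$ (numerically $0.52<\omega<0.53$). *)

theory Defs
  imports Complex_Main
begin

definition Xi :: real where
  "Xi = (THE \<xi>. \<xi> > 0 \<and> \<xi> * tanh (1/\<xi>) + 1 / (cosh (1/\<xi>))^2 = \<xi>)"

definition omega :: real where
  "omega = 1 / (Xi * cosh (1 / Xi))"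

definition Pi_hr :: "real \<Rightarrow> real \<Rightarrow> real" where
  "Pi_hr h r = (GREATEST p. p > 0 \<and> p * cosh (h / p) = r)"

definition z0 :: real where
  "z0 = sqrt ((sqrt 5 - 1) / 2)"

end

theory Submission
  imports Defs
begin

text \<open>With \<open>s = 1/\<Xi>\<close> the defining equation of \<open>\<Xi>\<close> becomes \<open>exp (-2s) = 2s - 1\<close>, whose root lies in
  \<open>(5/8, 1)\<close>, and \<open>\<omega> = s / cosh s\<close>. Putting \<open>t = h/\<Pi>\<close>, the equation \<open>\<Pi> cosh (h/\<Pi>) = r\<close> reads
  \<open>cosh t / t = r/h \<ge> cosh s / s\<close>; since \<open>cosh t / t\<close> decreases on \<open>(0, 1]\<close>, the largest \<open>\<Pi>\<close>
  corresponds to a \<open>t \<le> s\<close>. Hence \<open>sinh (h/\<Pi>) \<le> sinh s\<close>, and at the root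
  \<open>sinh\<^sup>2 s = (1 - s)\<^sup>2 / (2s - 1) \<le> 9/16 < z\<^sub>0\<^sup>2\<close>.\<close>

lemma Xi_equation_iff:
  fixes x :: real
  assumes "x > 0"
  shows "x * tanh (1/x) + 1 / (cosh (1/x))^2 = x \<longleftrightarrow> exp (-2/x) = 2/x - 1"
proof -
  define s where "s = 1/x"
  have s: "s > 0" "cosh s > 0" using assms by (simp_all add: s_def cosh_real_pos)
  have "(1/s) * tanh s + 1 / (cosh s)^2 = 1/s \<longleftrightarrow> sinh s * cosh s + s = (cosh s)^2"
    using s by (auto simp: tanh_def field_simps power2_eq_square)
      (metis distrib_left mult_left_cancel less_irrefl)+
  also have "\<dots> \<longleftrightarrow> s = cosh s * (cosh s - sinh s)"
    by (auto simp: algebra_simps power2_eq_square)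
  also have "cosh s * (cosh s - sinh s) = (1 + exp (-2*s)) / 2"
    unfolding cosh_def sinh_def by (simp add: field_simps power2_eq_square flip: exp_add)
  finally have "(1/s) * tanh s + 1 / (cosh s)^2 = 1/s \<longleftrightarrow> exp (-2*s) = 2*s - 1"
    by auto
  moreover have "x = 1/s" using assms by (simp add: s_def)
  ultimately show ?thesis by simp
qed

lemma exp_neg_two_root_unique:
  fixes a b :: real
  assumes "exp (-2*a) = 2*a - 1" "exp (-2*b) = 2*b - 1"
  shows "a = b"
  using assms by (smt (verit) exp_less_cancel_iff)

lemma exp_neg_two_root_exists: "\<exists>s::real. 0 < s \<and> exp (-2*s) = 2*s - 1"
proof -
  have "continuous_on {0..1} (\<lambda>s::real. 2*s - 1 - exp (-2*s))"
    by (intro continuous_intros)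
  then obtain s :: real where s: "0 \<le> s" "exp (-2*s) = 2*s - 1"
    using IVT'[of "\<lambda>s::real. 2*s - 1 - exp (-2*s)" 0 0 1] by auto
  moreover from s have "s \<noteq> 0" by auto
  ultimately show ?thesis by (intro exI[of _ s]) auto
qed

lemma exp_five_fourths_less_4: "exp (5/4::real) < 4"
proof -
  have "27/32 \<le> exp (-(5/32)::real)" using exp_ge_add_one_self[of "-(5/32)::real"] by simp
  hence a: "exp (5/32::real) \<le> 32/27" by (simp add: exp_minus field_simps)
  have "exp (5/4::real) = exp (5/32) ^ 8" by (simp flip: exp_of_nat_mult)
  also have "\<dots> \<le> (32/27) ^ 8" by (rule power_mono[OF a]) simp
  also have "\<dots> < 4" by (simp add: power_divide)
  finally show ?thesis .
qed

lemma exp_neg_two_root_bounds: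
  fixes s :: real
  assumes "exp (-2*s) = 2*s - 1"
  shows "5/8 < s" "s < 1"
proof -
  show "5/8 < s"
  proof (rule ccontr)
    assume "\<not> 5/8 < s"
    hence "exp (-(5/4)) \<le> exp (-2*s)" by simp
    moreover have "1/4 < exp (-(5/4::real))"
      using exp_five_fourths_less_4 by (simp add: exp_minus field_simps)
    ultimately show False using assms \<open>\<not> 5/8 < s\<close> by linarith
  qed
  show "s < 1"
  proof (rule ccontr)
    assume "\<not> s < 1"
    hence "exp (-2*s) \<le> exp (-2)" by simp
    moreover have "exp (-2::real) < 1" by simp
    ultimately show False using assms \<open>\<not> s < 1\<close> by linarith
  qed
qed

lemma sinh_sq_at_exp_neg_two_root:
  fixes s :: real
  assumes "exp (-2*s) = 2*s - 1"
  shows "(sinh s)^2 = (1 - s)^2 / (2*s - 1)"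
proof -
  define u where "u = exp (-s)"
  have u: "u > 0" "exp s = 1/u" unfolding u_def by (simp_all add: exp_minus inverse_eq_divide)
  have u2: "u^2 = 2*s - 1"
    using assms unfolding u_def by (simp add: power2_eq_square flip: exp_add)
  have "sinh s = (1 - u^2) / (2*u)"
    using u unfolding sinh_def u_def by (simp add: field_simps power2_eq_square)
  also have "\<dots> = (1 - s) / u" using u by (simp add: u2 field_simps)
  finally show ?thesis using u2 by (simp add: power_divide)
qed

lemma Xi_pos_root: "Xi > 0 \<and> exp (-2 / Xi) = 2 / Xi - 1"
proof -
  obtain s :: real where s: "0 < s" "exp (-2*s) = 2*s - 1" using exp_neg_two_root_exists by blast
  have "\<exists>!x::real. x > 0 \<and> x * tanh (1/x) + 1 / (cosh (1/x))^2 = x"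
  proof (rule ex1I)
    show "1/s > 0 \<and> (1/s) * tanh (1/(1/s)) + 1 / (cosh (1/(1/s)))^2 = 1/s"
      using s Xi_equation_iff[of "1/s"] by simp
  next
    fix x :: real assume "x > 0 \<and> x * tanh (1/x) + 1 / (cosh (1/x))^2 = x"
    hence "1/x = s" using Xi_equation_iff s exp_neg_two_root_unique[of "1/x" s] by auto
    thus "x = 1/s" by auto
  qed
  hence "Xi > 0 \<and> Xi * tanh (1/Xi) + 1 / (cosh (1/Xi))^2 = Xi"
    unfolding Xi_def by (rule theI')
  thus ?thesis using Xi_equation_iff by blast
qed

lemma inverse_Xi_bounds: "5/8 < 1/Xi" "1/Xi < 1"
  using exp_neg_two_root_bounds[of "1/Xi"] Xi_pos_root by auto

lemma omega_eq: "omega = (1/Xi) / cosh (1/Xi)"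
  unfolding omega_def by (simp add: field_simps)

lemma cosh_div_strict_antimono:
  fixes x y :: real
  assumes "0 < x" "x < y" "y \<le> 1"
  shows "cosh y / y < cosh x / x"
proof (rule DERIV_neg_imp_decreasing[OF assms(2)])
  fix t :: real assume "x \<le> t" "t \<le> y"
  hence t: "0 < t" "t \<le> 1" using assms by auto
  have "DERIV (\<lambda>t. cosh t / t) t :> (sinh t * t - cosh t * 1) / (t * t)"
    using t by (auto intro!: derivative_eq_intros)
  moreover have "sinh t * t \<le> sinh t" using t by (simp add: mult_left_le)
  hence "sinh t * t - cosh t < 0" using sinh_less_cosh_real[of t] by simp
  ultimately show "\<exists>d. DERIV (\<lambda>t. cosh t / t) t :> d \<and> d < 0"
    using t by (auto simp: divide_neg_pos)
qed

lemma cosh_div_eq_exists: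
  fixes s c :: real
  assumes "0 < s" "cosh s / s \<le> c"
  shows "\<exists>t. 0 < t \<and> t \<le> s \<and> cosh t / t = c"
proof -
  have c: "c > 0" using assms cosh_real_pos[of s] by (smt (verit) divide_pos_pos)
  define a where "a = min s (1/c)"
  have a: "0 < a" "a \<le> s" unfolding a_def using assms c by auto
  have "c \<le> 1/a" unfolding a_def using c assms by (auto simp: min_def field_simps)
  also have "\<dots> \<le> cosh a / a" using a by (intro divide_right_mono) (auto simp: cosh_real_ge_1)
  finally have "c \<le> cosh a / a" .
  moreover have "continuous_on {a..s} (\<lambda>t. cosh t / t)" using a by (intro continuous_intros) auto
  ultimately obtain t where "a \<le> t" "t \<le> s" "cosh t / t = c"
    using IVT2'[of "\<lambda>t. cosh t / t" s c a] assms a by auto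
  thus ?thesis using a by (intro exI[of _ t]) auto
qed

text \<open>The solution \<open>p = h/t\<close> with \<open>t \<le> 1\<close> is the largest one: a larger \<open>p\<close> would give a second
  solution \<open>h/p < t\<close> of \<open>cosh t / t = r/h\<close> on the interval where this function is injective.\<close>

lemma Pi_hr_eqI:
  fixes h r t :: real
  assumes h: "h > 0" and t: "0 < t" "t \<le> 1" and eq: "cosh t / t = r / h"
  shows "Pi_hr h r = h / t"
  unfolding Pi_hr_def
proof (rule Greatest_equality)
  show "h / t > 0 \<and> h / t * cosh (h / (h / t)) = r"
    using h t eq by (auto simp: field_simps)
next
  fix p assume p: "p > 0 \<and> p * cosh (h / p) = r"
  have "cosh (h / p) / (h / p) = r / h" using p h by (auto simp: field_simps)
  hence "\<not> h / p < t" using cosh_div_strict_antimono[of "h / p" t] p h t eq by auto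
  thus "p \<le> h / t" using p h t by (simp add: field_simps)
qed

lemma h_div_Pi_hr_le:
  fixes h r :: real
  assumes "h > 0" "r > 0" "h / r \<le> omega"
  shows "h / Pi_hr h r \<le> 1/Xi"
proof -
  have "cosh (1/Xi) / (1/Xi) \<le> r / h"
    using assms cosh_real_pos[of "1/Xi"] Xi_pos_root unfolding omega_eq
    by (simp add: field_simps)
  then obtain t where t: "0 < t" "t \<le> 1/Xi" "cosh t / t = r / h"
    using cosh_div_eq_exists[of "1/Xi" "r/h"] Xi_pos_root by auto
  hence "Pi_hr h r = h / t" using Pi_hr_eqI assms inverse_Xi_bounds by force
  thus ?thesis using t assms by simp
qed

lemma sinh_inverse_Xi_less_z0: "sinh (1/Xi) < z0"
proof -
  have "(sinh (1/Xi))^2 = (1 - 1/Xi)^2 / (2/Xi - 1)"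
    using sinh_sq_at_exp_neg_two_root[of "1/Xi"] Xi_pos_root by simp
  also have "\<dots> \<le> (3/8)^2 / (1/4)"
    using inverse_Xi_bounds by (intro frac_le power_mono) auto
  also have "\<dots> < (sqrt 5 - 1) / 2"
    using real_less_rsqrt[of "17/8" 5] by (simp add: power2_eq_square)
  finally show ?thesis unfolding z0_def by (rule real_less_rsqrt)
qed

theorem lemma4p2:
  shows "bdd_above {sinh (h / Pi_hr h r) | h r. h > 0 \<and> r > 0 \<and> h / r \<le> omega}
    \<and> Sup {sinh (h / Pi_hr h r) | h r. h > 0 \<and> r > 0 \<and> h / r \<le> omega} < z0"
proof -
  let ?S = "{sinh (h / Pi_hr h r) | h r. h > 0 \<and> r > 0 \<and> h / r \<le> omega}"
  have ub: "\<forall>x\<in>?S. x \<le> sinh (1/Xi)" using h_div_Pi_hr_le by auto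
  have "omega > 0" unfolding omega_def using Xi_pos_root by (simp add: cosh_real_pos)
  hence "sinh (omega / Pi_hr omega 1) \<in> ?S" by force
  hence "Sup ?S \<le> sinh (1/Xi)" using ub by (intro cSup_least) auto
  moreover have "bdd_above ?S" using ub by (intro bdd_aboveI[of _ "sinh (1/Xi)"]) auto
  ultimately show ?thesis using sinh_inverse_Xi_less_z0 by linarith
qed

end
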